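(* Let $(\mathcal S,\mathcal T)$ be a measurable space and let $y_n=(x_n,\xi_n,\rho_n)_{n\in\mathbb Z}$ be a Markov-modulated process as described in the context, with $R=\xi_0+\sum_{n=1}^\infty\xi_n\prod_{i=0}^{n-1}\rho_i$. For $x\in\mathcal S$ let $\Gamma(x)=\inf\{a\in\mathbb R: P_x^-(R\le a)>1/2\}$. Then for any $t>0$ and $z\in\mathcal S$, $$P_z^-(|R|\ge t)\ge\tfrac12\,P_z^-\big(|R_n+\Gamma(x_{n-1})\Pi_n|>t\ \text{for some }n\ge0\big),$$ where $\Pi_0=1$, $\Pi_n=\prod_{i=0}^{n-1}\rho_i$, $R_0=0$ and $R_n=\sum_{i=0}^{n-1}\xi_i\Pi_i$ for $n\ge1$.
   Context: $(x_n)_{n\in\mathbb Z}$ is a stationary Markov chain on $(\mathcal S,\mathcal T)$ with transition kernel $H$, and $(x_n,\xi_n,\rho_n)_{n\in\mathbb Z}$ with $(\xi_n,\rho_n)\in\mathbb R^2$ is a stationary Markov chain whose transitions depend only on the position of $(x_n)$: $P(x_n\in A,(\xi_n,\rho_n)\in B\mid\sigma((x_i,\xi_i,\rho_i):i<n))=\int_A H(x_{n-1},dy)\mathbb G(x_{n-1},y,B)$ with $\mathbb G(x,y,\cdot)=P((\xi_1,\rho_1)\in\cdot\mid x_0=x,x_1=y)$ a kernel. The series defining $R$ is assumed to converge almost surely (so that $R$ is defined). $P_x^-(\cdot)=P(\cdot\mid x_{-1}=x)$. *)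

theory Defs
  imports "HOL-Probability.Probability"
begin

definition proc_sigma ::
  "'w measure \<Rightarrow> 's measure \<Rightarrow> (int \<Rightarrow> 'w \<Rightarrow> 's) \<Rightarrow> (int \<Rightarrow> 'w \<Rightarrow> real)
     \<Rightarrow> (int \<Rightarrow> 'w \<Rightarrow> real) \<Rightarrow> int set \<Rightarrow> 'w measure" where
  "proc_sigma P S X Xi Rho I =
     sigma (space P)
       ({{\<omega> \<in> space P. X i \<omega> \<in> A} | i A. i \<in> I \<and> A \<in> sets S} \<union>
        {{\<omega> \<in> space P. (Xi i \<omega>, Rho i \<omega>) \<in> B} | i B.
            i \<in> I \<and> B \<in> sets (borel :: (real \<times> real) measure)})"

text \<open>Markov-modulated transition at time n under the probability measure P:
  P(X n \<in> A, (Xi n, Rho n) \<in> B | sigma(y_i : i < n))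
    = \<integral>_A H(X (n-1), dy) G(X (n-1), y, B),
  written via the defining identity of conditional probability
  (integrated over every event C of the past sigma-algebra).\<close>

definition markov_step ::
  "'w measure \<Rightarrow> 's measure \<Rightarrow> ('s \<Rightarrow> 's measure) \<Rightarrow> ('s \<Rightarrow> 's \<Rightarrow> (real \<times> real) measure)
     \<Rightarrow> (int \<Rightarrow> 'w \<Rightarrow> 's) \<Rightarrow> (int \<Rightarrow> 'w \<Rightarrow> real) \<Rightarrow> (int \<Rightarrow> 'w \<Rightarrow> real) \<Rightarrow> int \<Rightarrow> bool" where
  "markov_step P S H G X Xi Rho n \<longleftrightarrow>
     (\<forall>A \<in> sets S. \<forall>B \<in> sets (borel :: (real \<times> real) measure).
      \<forall>C \<in> sets (proc_sigma P S X Xi Rho {..<n}).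
        measure P ({\<omega> \<in> space P. X n \<omega> \<in> A \<and> (Xi n \<omega>, Rho n \<omega>) \<in> B} \<inter> C) =
        (\<integral>\<omega>. indicator C \<omega> *
              (\<integral>y. indicator A y * measure (G (X (n - 1) \<omega>) y) B \<partial>(H (X (n - 1) \<omega>))) \<partial>P))"

definition proc_shift ::
  "(int \<Rightarrow> 'w \<Rightarrow> 's) \<Rightarrow> (int \<Rightarrow> 'w \<Rightarrow> real) \<Rightarrow> (int \<Rightarrow> 'w \<Rightarrow> real) \<Rightarrow> int
     \<Rightarrow> 'w \<Rightarrow> int \<Rightarrow> 's \<times> real \<times> real" where
  "proc_shift X Xi Rho k \<omega> = (\<lambda>i. (X (i + k) \<omega>, Xi (i + k) \<omega>, Rho (i + k) \<omega>))"

definition PiR :: "(int \<Rightarrow> 'w \<Rightarrow> real) \<Rightarrow> nat \<Rightarrow> 'w \<Rightarrow> real" where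
  "PiR Rho n \<omega> = (\<Prod>i<n. Rho (int i) \<omega>)"

definition Rpart :: "(int \<Rightarrow> 'w \<Rightarrow> real) \<Rightarrow> (int \<Rightarrow> 'w \<Rightarrow> real) \<Rightarrow> nat \<Rightarrow> 'w \<Rightarrow> real" where
  "Rpart Xi Rho n \<omega> = (\<Sum>i<n. Xi (int i) \<omega> * PiR Rho i \<omega>)"

definition Rser_term :: "(int \<Rightarrow> 'w \<Rightarrow> real) \<Rightarrow> (int \<Rightarrow> 'w \<Rightarrow> real) \<Rightarrow> 'w \<Rightarrow> nat \<Rightarrow> real" where
  "Rser_term Xi Rho \<omega> n = Xi (int (n + 1)) \<omega> * PiR Rho (n + 1) \<omega>"

definition Rfull :: "(int \<Rightarrow> 'w \<Rightarrow> real) \<Rightarrow> (int \<Rightarrow> 'w \<Rightarrow> real) \<Rightarrow> 'w \<Rightarrow> real" where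
  "Rfull Xi Rho \<omega> = Xi 0 \<omega> + (\<Sum>n. Rser_term Xi Rho \<omega> n)"

definition Gam :: "('s \<Rightarrow> 'w measure) \<Rightarrow> ('w \<Rightarrow> real) \<Rightarrow> 's \<Rightarrow> real" where
  "Gam Pm R x = Inf {a::real. measure (Pm x) {\<omega> \<in> space (Pm x). R \<omega> \<le> a} > 1/2}"

end

theory Submission
  imports Defs
begin

text \<open>Let \<tau> be the first n with |R_n + \<Gamma>(x_(n-1)) \<Pi>_n| > t and write R = R_n + \<Pi>_n L_n, where L_n is
  the perpetuity of the process restarted at time n. By the Markov property, given the past before
  time n, L_n is distributed as R under P^-_(x_(n-1)), a law with median \<Gamma>(x_(n-1)). Hence with
  conditional probability at least 1/2 the correction \<Pi>_n (L_n - \<Gamma>(x_(n-1))) has the sign of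
  R_n + \<Gamma>(x_(n-1)) \<Pi>_n, and then |R| > t. Summing over the disjoint events {\<tau> = n} gives the claim.
  The law of the infinite future is never constructed: the conditional statement is derived from the
  finite-horizon laws of (y_n, ..., y_(n+m-1)), obtained by iterating the one-step kernel, together
  with Fatou's lemma in both directions as m tends to infinity.\<close>

lemma le_abs_if_same_side:
  fixes r p c R t :: real
  assumes "t < \<bar>r + c * p\<bar>" and "(r + c * p) * p * c \<le> (r + c * p) * (R - r)"
  shows "t \<le> \<bar>R\<bar>"
proof -
  have "0 \<le> (r + c * p) * (R - (r + c * p))" using assms(2) by (simp add: algebra_simps)
  then have "\<bar>r + c * p\<bar> \<le> \<bar>R\<bar>" by (auto simp: zero_le_mult_iff abs_if)
  with assms(1) show ?thesis by simp
qed

lemma ennreal_half_mult: "0 \<le> p \<Longrightarrow> ennreal (1/2 * p) = 1/2 * ennreal p"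
proof -
  have "ennreal (1/2) = 1/2"
    using ennreal_divide_numeral[of 1 num.One] by (simp add: divide_ennreal_def)
  then show "0 \<le> p \<Longrightarrow> ennreal (1/2 * p) = 1/2 * ennreal p"
    by (subst ennreal_mult) (simp_all add: divide_ennreal_def)
qed

lemma of_bool_le_liminf:
  fixes f :: "nat \<Rightarrow> real"
  assumes f: "f \<longlonglongrightarrow> l" and \<delta>: "0 < \<delta>"
  shows "of_bool (a \<le> l) \<le> liminf (\<lambda>m. of_bool (a - \<delta> \<le> f m) :: ennreal)"
proof (cases "a \<le> l")
  case True
  then have "\<forall>\<^sub>F m in sequentially. a - \<delta> < f m" using f \<delta> by (intro order_tendstoD(1)) auto
  then have "\<forall>\<^sub>F m in sequentially. 1 \<le> (of_bool (a - \<delta> \<le> f m) :: ennreal)"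
    by eventually_elim simp
  then show ?thesis using True by (simp add: Liminf_bounded)
qed simp

lemma limsup_of_bool_le:
  fixes f :: "nat \<Rightarrow> real"
  assumes f: "f \<longlonglongrightarrow> l"
  shows "limsup (\<lambda>m. of_bool (a \<le> f m) :: ennreal) \<le> of_bool (a \<le> l)"
proof (cases "a \<le> l")
  case False
  then have "\<forall>\<^sub>F m in sequentially. f m < a" using f by (intro order_tendstoD(2)) auto
  then have "\<forall>\<^sub>F m in sequentially. (of_bool (a \<le> f m) :: ennreal) \<le> 0"
    by eventually_elim simp
  then have "limsup (\<lambda>m. of_bool (a \<le> f m) :: ennreal) \<le> 0" by (rule Limsup_bounded)
  with False show ?thesis by simp
qed (simp add: Limsup_bounded)

lemma sets_Collect_restrict:
  assumes "C \<in> sets M" and "{\<omega> \<in> space M. p \<omega>} \<in> sets M"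
  shows "{\<omega> \<in> C. p \<omega>} \<in> sets M"
proof -
  have "{\<omega> \<in> C. p \<omega>} = C \<inter> {\<omega> \<in> space M. p \<omega>}" using sets.sets_into_space[OF assms(1)] by blast
  then show ?thesis using assms by (simp add: sets.Int)
qed

lemma (in finite_measure) le_emeasure_le_of_forall_pos:
  fixes f g :: "'a \<Rightarrow> real"
  assumes C: "C \<in> sets M" and f: "f \<in> borel_measurable M" and g: "g \<in> borel_measurable M"
    and approx: "\<And>\<delta>. 0 < \<delta> \<Longrightarrow> a \<le> emeasure M {\<omega> \<in> C. f \<omega> - \<delta> \<le> g \<omega>}"
  shows "a \<le> emeasure M {\<omega> \<in> C. f \<omega> \<le> g \<omega>}"
proof -
  define E where "E j = {\<omega> \<in> C. f \<omega> - 1 / real (Suc j) \<le> g \<omega>}" for j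
  have E_sets: "E j \<in> sets M" for j
  proof -
    have "{\<omega> \<in> space M. f \<omega> - 1 / real (Suc j) \<le> g \<omega>} \<in> sets M" using f g by measurable
    then show ?thesis unfolding E_def by (rule sets_Collect_restrict[OF C])
  qed
  have "decseq E"
    unfolding decseq_def E_def by (auto intro: order.trans[rotated] simp: frac_le)
  then have "(\<lambda>j. emeasure M (E j)) \<longlonglongrightarrow> emeasure M (\<Inter>j. E j)"
    using E_sets by (intro Lim_emeasure_decseq) (auto simp: emeasure_eq_measure)
  moreover have "(\<Inter>j. E j) = {\<omega> \<in> C. f \<omega> \<le> g \<omega>}"
  proof (intro equalityI subsetI)
    fix \<omega> assume \<omega>: "\<omega> \<in> (\<Inter>j. E j)"
    have "f \<omega> \<le> g \<omega>"
    proof (rule field_le_epsilon)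
      fix e :: real assume "0 < e"
      then obtain j where "inverse (real (Suc j)) < e" using reals_Archimedean by blast
      moreover have "f \<omega> - 1 / real (Suc j) \<le> g \<omega>" using \<omega> by (auto simp: E_def)
      ultimately show "f \<omega> \<le> g \<omega> + e" by (simp add: inverse_eq_divide)
    qed
    then show "\<omega> \<in> {\<omega> \<in> C. f \<omega> \<le> g \<omega>}" using \<omega> by (auto simp: E_def)
  qed (auto simp: E_def intro: order.trans[rotated])
  moreover have "a \<le> emeasure M (E j)" for j unfolding E_def by (rule approx) simp
  ultimately show ?thesis by (intro LIMSEQ_le_const) auto
qed

section \<open>Medians\<close>

definition upper_median :: "'a measure \<Rightarrow> ('a \<Rightarrow> real) \<Rightarrow> real" where
  "upper_median N R = Inf {a. 1/2 < measure N {\<omega> \<in> space N. R \<omega> \<le> a}}"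

lemma Gam_eq_upper_median: "Gam Pm R x = upper_median (Pm x) R"
  by (simp add: Gam_def upper_median_def)

context prob_space
begin

context
  fixes R :: "'a \<Rightarrow> real"
  assumes R: "R \<in> borel_measurable M"
begin

lemma cdf_distr_eq_prob: "cdf (distr M borel R) a = prob {\<omega> \<in> space M. R \<omega> \<le> a}"
  using R by (simp add: cdf_def measure_distr vimage_def Int_def conj_commute)

lemma upper_median_set_nonempty: "{a. 1/2 < prob {\<omega> \<in> space M. R \<omega> \<le> a}} \<noteq> {}"
proof -
  interpret D: real_distribution "distr M borel R" using R by simp
  have "\<forall>\<^sub>F a in at_top. 1/2 < cdf (distr M borel R) a"
    using D.cdf_lim_at_top_prob by (rule order_tendstoD) simp
  then obtain a where "1/2 < cdf (distr M borel R) a"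
    by (auto simp: eventually_at_top_linorder)
  then show ?thesis using cdf_distr_eq_prob by auto
qed

lemma upper_median_set_bdd_below: "bdd_below {a. 1/2 < prob {\<omega> \<in> space M. R \<omega> \<le> a}}"
proof -
  interpret D: real_distribution "distr M borel R" using R by simp
  have "\<forall>\<^sub>F a in at_bot. cdf (distr M borel R) a < 1/2"
    using D.cdf_lim_at_bot by (rule order_tendstoD) simp
  then obtain b where b: "\<And>a. a \<le> b \<Longrightarrow> cdf (distr M borel R) a < 1/2"
    by (auto simp: eventually_at_bot_linorder)
  show ?thesis
  proof (rule bdd_belowI)
    fix a assume "a \<in> {a. 1/2 < prob {\<omega> \<in> space M. R \<omega> \<le> a}}"
    then have "\<not> cdf (distr M borel R) a < 1/2" using cdf_distr_eq_prob by simp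
    then show "b \<le> a" using b[of a] by linarith
  qed
qed

lemma upper_median_le: "1/2 < prob {\<omega> \<in> space M. R \<omega> \<le> a} \<Longrightarrow> upper_median M R \<le> a"
  unfolding upper_median_def by (rule cInf_lower[OF _ upper_median_set_bdd_below]) simp

lemma upper_median_less_iff:
  "upper_median M R < c \<longleftrightarrow> (\<exists>q\<in>\<rat>. q < c \<and> 1/2 < prob {\<omega> \<in> space M. R \<omega> \<le> q})"
proof
  assume "upper_median M R < c"
  then obtain a where a: "1/2 < prob {\<omega> \<in> space M. R \<omega> \<le> a}" "a < c"
    unfolding upper_median_def
    using cInf_less_iff[OF upper_median_set_nonempty upper_median_set_bdd_below] by auto
  obtain q where q: "q \<in> \<rat>" "a < q" "q < c" using Rats_dense_in_real[OF a(2)] by blast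
  have "prob {\<omega> \<in> space M. R \<omega> \<le> a} \<le> prob {\<omega> \<in> space M. R \<omega> \<le> q}"
    using R q(2) by (intro finite_measure_mono) auto
  then show "\<exists>q\<in>\<rat>. q < c \<and> 1/2 < prob {\<omega> \<in> space M. R \<omega> \<le> q}" using a q by force
next
  assume "\<exists>q\<in>\<rat>. q < c \<and> 1/2 < prob {\<omega> \<in> space M. R \<omega> \<le> q}"
  then show "upper_median M R < c" using upper_median_le by force
qed

lemma prob_le_upper_median: "1/2 \<le> prob {\<omega> \<in> space M. R \<omega> \<le> upper_median M R}"
proof -
  interpret D: real_distribution "distr M borel R" using R by simp
  let ?m = "upper_median M R"
  have "(cdf (distr M borel R) \<longlongrightarrow> cdf (distr M borel R) ?m) (at_right ?m)"
    using D.cdf_is_right_cont by (simp add: continuous_within)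
  moreover have "\<forall>\<^sub>F a in at_right ?m. 1/2 \<le> cdf (distr M borel R) a"
  proof (rule eventually_at_rightI[of ?m "?m + 1"])
    fix a assume "a \<in> {?m<..<?m + 1}"
    then obtain q where "q < a" "1/2 < prob {\<omega> \<in> space M. R \<omega> \<le> q}"
      using upper_median_less_iff by auto
    moreover have "cdf (distr M borel R) q \<le> cdf (distr M borel R) a"
      using \<open>q < a\<close> by (intro D.cdf_nondecreasing) simp
    ultimately show "1/2 \<le> cdf (distr M borel R) a" using cdf_distr_eq_prob by simp
  qed simp
  ultimately have "1/2 \<le> cdf (distr M borel R) ?m"
    by (intro tendsto_lowerbound) auto
  then show ?thesis using cdf_distr_eq_prob by simp
qed

lemma prob_ge_upper_median: "1/2 \<le> prob {\<omega> \<in> space M. upper_median M R \<le> R \<omega>}"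
proof -
  interpret D: real_distribution "distr M borel R" using R by simp
  let ?m = "upper_median M R"
  have "\<forall>\<^sub>F a in at_left ?m. cdf (distr M borel R) a \<le> 1/2"
  proof (rule eventually_at_leftI[of "?m - 1"])
    fix a assume "a \<in> {?m - 1<..<?m}"
    then show "cdf (distr M borel R) a \<le> 1/2"
      using upper_median_le[of a] cdf_distr_eq_prob by force
  qed simp
  then have "measure (distr M borel R) {..<?m} \<le> 1/2"
    by (intro tendsto_upperbound[OF D.cdf_at_left]) auto
  then have "prob {\<omega> \<in> space M. R \<omega> < ?m} \<le> 1/2"
    using R by (simp add: measure_distr vimage_def Int_def conj_commute)
  moreover have "prob {\<omega> \<in> space M. ?m \<le> R \<omega>} = 1 - prob {\<omega> \<in> space M. R \<omega> < ?m}"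
    using R by (subst prob_compl[symmetric]) (auto intro!: arg_cong[where f=prob])
  ultimately show ?thesis by simp
qed

lemma prob_scaled_upper_median: "1/2 \<le> prob {\<omega> \<in> space M. \<sigma> * upper_median M R \<le> \<sigma> * R \<omega>}"
proof (cases \<sigma> "0 :: real" rule: linorder_cases)
  case less
  then show ?thesis using prob_le_upper_median by (simp add: mult_le_cancel_left)
next
  case equal
  then show ?thesis by (simp add: prob_space)
next
  case greater
  then show ?thesis using prob_ge_upper_median by (simp add: mult_le_cancel_left)
qed

end

end

section \<open>Disintegration along a kernel\<close>

lemma measurable_ident_subalgebra:
  assumes "subalgebra M F"
  shows "(\<lambda>x. x) \<in> M \<rightarrow>\<^sub>M F"
proof (rule measurableI)
  fix A assume "A \<in> sets F"
  moreover have "A \<subseteq> space M" using sets.sets_into_space[OF \<open>A \<in> sets F\<close>] assms by (simp add: subalgebra_def)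
  ultimately show "(\<lambda>x. x) -` A \<inter> space M \<in> sets M" using assms by (auto simp: subalgebra_def)
qed (use assms in \<open>simp add: subalgebra_def\<close>)

lemma Int_stable_rectangles:
  assumes "Int_stable E"
  shows "Int_stable {a \<times> b | a b. a \<in> sets F \<and> b \<in> E}"
proof (rule Int_stableI)
  fix x y assume "x \<in> {a \<times> b | a b. a \<in> sets F \<and> b \<in> E}" "y \<in> {a \<times> b | a b. a \<in> sets F \<and> b \<in> E}"
  then obtain a b a' b' where xy: "x = a \<times> b" "y = a' \<times> b'"
    and ab: "a \<in> sets F" "a' \<in> sets F" "b \<in> E" "b' \<in> E"
    by auto
  have "x \<inter> y = (a \<inter> a') \<times> (b \<inter> b')" using xy by auto
  moreover have "a \<inter> a' \<in> sets F" using ab by auto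
  moreover have "b \<inter> b' \<in> E" using assms ab by (auto simp: Int_stable_def)
  ultimately show "x \<inter> y \<in> {a \<times> b | a b. a \<in> sets F \<and> b \<in> E}" by auto
qed

lemma sets_pair_measure_rectangles:
  assumes E: "E \<subseteq> Pow (space N)" "sets N = sigma_sets (space N) E" "space N \<in> E"
  shows "sets (F \<Otimes>\<^sub>M N) = sigma_sets (space F \<times> space N) {a \<times> b | a b. a \<in> sets F \<and> b \<in> E}"
proof -
  have E_space: "{a \<times> b | a b. a \<in> sets F \<and> b \<in> E} \<subseteq> Pow (space F \<times> space N)"
    using E(1) sets.sets_into_space[of _ F] by blast
  have "sets (F \<Otimes>\<^sub>M N) = sets (sigma (space F \<times> space N) {a \<times> b | a b. a \<in> sets F \<and> b \<in> E})"
    by (rule sets_pair_eq[where Ca="{space F}" and Cb="{space N}"])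
      (use E sets.space_closed[of F] in \<open>auto simp: sets.sigma_sets_eq\<close>)
  then show ?thesis using sets_measure_of[OF E_space] by simp
qed

lemma measurable_distr_Pair_kernel:
  assumes F: "subalgebra P F" and K: "K \<in> P \<rightarrow>\<^sub>M subprob_algebra N"
  shows "(\<lambda>\<omega>. distr (K \<omega>) (F \<Otimes>\<^sub>M N) (Pair \<omega>)) \<in> P \<rightarrow>\<^sub>M subprob_algebra (F \<Otimes>\<^sub>M N)"
proof (rule measurable_distr2[OF _ K])
  show "(\<lambda>(\<omega>, y). (\<omega>, y)) \<in> P \<Otimes>\<^sub>M N \<rightarrow>\<^sub>M F \<Otimes>\<^sub>M N"
    using measurable_Pair[OF measurable_compose[OF measurable_fst measurable_ident_subalgebra[OF F]]
        measurable_snd]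
    by (simp add: case_prod_beta')
qed

lemma Pair_measurable_kernel:
  assumes F: "subalgebra P F" and K: "K \<in> P \<rightarrow>\<^sub>M subprob_algebra N" and \<omega>: "\<omega> \<in> space P"
  shows "Pair \<omega> \<in> K \<omega> \<rightarrow>\<^sub>M F \<Otimes>\<^sub>M N"
  using \<omega> F by (subst measurable_cong_sets[OF sets_kernel[OF K \<omega>] refl]) (auto simp: subalgebra_def)

lemma emeasure_distr_Pair_kernel_rect:
  assumes F: "subalgebra P F" and K: "K \<in> P \<rightarrow>\<^sub>M subprob_algebra N" and \<omega>: "\<omega> \<in> space P"
    and A: "A \<in> sets F" and B: "B \<in> sets N"
  shows "emeasure (distr (K \<omega>) (F \<Otimes>\<^sub>M N) (Pair \<omega>)) (A \<times> B) = indicator A \<omega> * emeasure (K \<omega>) B"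
proof -
  have "Pair \<omega> -` (A \<times> B) \<inter> space (K \<omega>) = (if \<omega> \<in> A then B else {})"
    using sets_eq_imp_space_eq[OF sets_kernel[OF K \<omega>]] sets.sets_into_space[OF B] by auto
  then show ?thesis
    using A B by (simp add: emeasure_distr[OF Pair_measurable_kernel[OF F K \<omega>]])
qed

lemma distr_graph_eq_bind_kernel:
  assumes P: "prob_space P" and F: "subalgebra P F"
    and Y: "Y \<in> P \<rightarrow>\<^sub>M N" and K: "K \<in> P \<rightarrow>\<^sub>M subprob_algebra N"
    and E: "E \<subseteq> Pow (space N)" "sets N = sigma_sets (space N) E" "Int_stable E" "space N \<in> E"
    and rect: "\<And>A B. A \<in> sets F \<Longrightarrow> B \<in> E \<Longrightarrow>
        emeasure P (A \<inter> Y -` B) = (\<integral>\<^sup>+\<omega>. indicator A \<omega> * emeasure (K \<omega>) B \<partial>P)"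
  shows "distr P (F \<Otimes>\<^sub>M N) (\<lambda>\<omega>. (\<omega>, Y \<omega>)) = P \<bind> (\<lambda>\<omega>. distr (K \<omega>) (F \<Otimes>\<^sub>M N) (Pair \<omega>))"
proof -
  interpret prob_space P by (rule P)
  let ?E = "{a \<times> b | a b. a \<in> sets F \<and> b \<in> E}"
  have graph: "(\<lambda>\<omega>. (\<omega>, Y \<omega>)) \<in> P \<rightarrow>\<^sub>M F \<Otimes>\<^sub>M N"
    by (intro measurable_Pair measurable_ident_subalgebra[OF F] Y)
  note sets_FN = sets_pair_measure_rectangles[OF E(1,2,4), of F]
  show ?thesis
  proof (rule measure_eqI_generator_eq_countable[of ?E "space F \<times> space N" _ _ "{space F \<times> space N}"])
    show "Int_stable ?E" using E(3) by (rule Int_stable_rectangles)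
    show "?E \<subseteq> Pow (space F \<times> space N)" using E(1) sets.sets_into_space[of _ F] by blast
    show "sets (P \<bind> (\<lambda>\<omega>. distr (K \<omega>) (F \<Otimes>\<^sub>M N) (Pair \<omega>))) = sigma_sets (space F \<times> space N) ?E"
      using sets_FN not_empty by (subst sets_bind[where N="F \<Otimes>\<^sub>M N"]) auto
    show "{space F \<times> space N} \<subseteq> ?E" using E(4) by blast
    show "emeasure (distr P (F \<Otimes>\<^sub>M N) (\<lambda>\<omega>. (\<omega>, Y \<omega>))) a \<noteq> \<infinity>" for a
      using prob_space.emeasure_le_1[OF prob_space_distr[OF graph], of a] by (auto simp: top_unique)
  next
    fix R assume "R \<in> ?E"
    then obtain A B where R: "R = A \<times> B" and A: "A \<in> sets F" and B: "B \<in> E" by blast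
    have B_sets: "B \<in> sets N" using B E(2) by simp
    then have R_sets: "R \<in> sets (F \<Otimes>\<^sub>M N)" using A by (simp add: R)
    have "emeasure (distr P (F \<Otimes>\<^sub>M N) (\<lambda>\<omega>. (\<omega>, Y \<omega>))) R = emeasure P (A \<inter> Y -` B)"
      using sets.sets_into_space[OF A] F
      by (subst emeasure_distr[OF graph R_sets])
        (auto simp: R subalgebra_def intro!: arg_cong[where f="emeasure P"])
    also have "\<dots> = (\<integral>\<^sup>+\<omega>. emeasure (distr (K \<omega>) (F \<Otimes>\<^sub>M N) (Pair \<omega>)) R \<partial>P)"
      unfolding rect[OF A B] R
      by (intro nn_integral_cong) (simp add: emeasure_distr_Pair_kernel_rect[OF F K _ A B_sets])
    also have "\<dots> = emeasure (P \<bind> (\<lambda>\<omega>. distr (K \<omega>) (F \<Otimes>\<^sub>M N) (Pair \<omega>))) R"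
      by (rule emeasure_bind[OF not_empty measurable_distr_Pair_kernel[OF F K] R_sets, symmetric])
    finally show "emeasure (distr P (F \<Otimes>\<^sub>M N) (\<lambda>\<omega>. (\<omega>, Y \<omega>))) R =
        emeasure (P \<bind> (\<lambda>\<omega>. distr (K \<omega>) (F \<Otimes>\<^sub>M N) (Pair \<omega>))) R" .
  qed (simp_all add: sets_FN)
qed

lemma nn_integral_disintegration:
  assumes P: "prob_space P" and F: "subalgebra P F"
    and Y: "Y \<in> P \<rightarrow>\<^sub>M N" and K: "K \<in> P \<rightarrow>\<^sub>M subprob_algebra N"
    and E: "E \<subseteq> Pow (space N)" "sets N = sigma_sets (space N) E" "Int_stable E" "space N \<in> E"
    and rect: "\<And>A B. A \<in> sets F \<Longrightarrow> B \<in> E \<Longrightarrow>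
        emeasure P (A \<inter> Y -` B) = (\<integral>\<^sup>+\<omega>. indicator A \<omega> * emeasure (K \<omega>) B \<partial>P)"
    and g: "case_prod g \<in> borel_measurable (F \<Otimes>\<^sub>M N)"
  shows "(\<integral>\<^sup>+\<omega>. g \<omega> (Y \<omega>) \<partial>P) = (\<integral>\<^sup>+\<omega>. \<integral>\<^sup>+y. g \<omega> y \<partial>K \<omega> \<partial>P)"
proof -
  have graph: "(\<lambda>\<omega>. (\<omega>, Y \<omega>)) \<in> P \<rightarrow>\<^sub>M F \<Otimes>\<^sub>M N"
    by (intro measurable_Pair measurable_ident_subalgebra[OF F] Y)
  have "(\<integral>\<^sup>+\<omega>. g \<omega> (Y \<omega>) \<partial>P) = (\<integral>\<^sup>+z. case_prod g z \<partial>distr P (F \<Otimes>\<^sub>M N) (\<lambda>\<omega>. (\<omega>, Y \<omega>)))"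
    using g by (subst nn_integral_distr[OF graph]) simp_all
  also have "\<dots> = (\<integral>\<^sup>+z. case_prod g z \<partial>(P \<bind> (\<lambda>\<omega>. distr (K \<omega>) (F \<Otimes>\<^sub>M N) (Pair \<omega>))))"
    by (simp only: distr_graph_eq_bind_kernel[OF P F Y K E rect])
  also have "\<dots> = (\<integral>\<^sup>+\<omega>. \<integral>\<^sup>+z. case_prod g z \<partial>distr (K \<omega>) (F \<Otimes>\<^sub>M N) (Pair \<omega>) \<partial>P)"
    by (rule nn_integral_bind[OF g measurable_distr_Pair_kernel[OF F K]])
  also have "\<dots> = (\<integral>\<^sup>+\<omega>. \<integral>\<^sup>+y. g \<omega> y \<partial>K \<omega> \<partial>P)"
  proof (rule nn_integral_cong)
    fix \<omega> assume "\<omega> \<in> space P"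
    from Pair_measurable_kernel[OF F K this]
    show "(\<integral>\<^sup>+z. case_prod g z \<partial>distr (K \<omega>) (F \<Otimes>\<^sub>M N) (Pair \<omega>)) = (\<integral>\<^sup>+y. g \<omega> y \<partial>K \<omega>)"
      using nn_integral_distr[of "Pair \<omega>" "K \<omega>" "F \<Otimes>\<^sub>M N" "case_prod g"] g by simp
  qed
  finally show ?thesis .
qed

section \<open>Iterated kernels\<close>

abbreviation path_space :: "'s measure \<Rightarrow> 'b measure \<Rightarrow> nat \<Rightarrow> (nat \<Rightarrow> 's \<times> 'b) measure" where
  "path_space S B m \<equiv> PiM {..<m} (\<lambda>_. S \<Otimes>\<^sub>M B)"

definition last_state :: "'s \<Rightarrow> (nat \<Rightarrow> 's \<times> 'b) \<Rightarrow> nat \<Rightarrow> 's" where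
  "last_state x v m = (if m = 0 then x else fst (v (m - 1)))"

text \<open>iter_kernel K m h x integrates h over the first m steps of the chain started in x, each
  step being a pair (new state, label) drawn from K at the current state.\<close>

fun iter_kernel :: "('s \<Rightarrow> ('s \<times> 'b) measure) \<Rightarrow> nat \<Rightarrow> ((nat \<Rightarrow> 's \<times> 'b) \<Rightarrow> ennreal) \<Rightarrow> 's \<Rightarrow> ennreal"
  where
    "iter_kernel K 0 h x = h (\<lambda>_. undefined)"
  | "iter_kernel K (Suc m) h x = iter_kernel K m (\<lambda>v. \<integral>\<^sup>+y. h (v(m := y)) \<partial>K (last_state x v m)) x"

lemma iter_kernel_zero [simp]: "iter_kernel K m (\<lambda>v. 0) x = 0"
  by (induction m) auto

lemma iter_kernel_indicator_mult:
  "iter_kernel K m (\<lambda>v. indicator C \<omega> * h v) x = indicator C \<omega> * iter_kernel K m h x"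
  by (cases "\<omega> \<in> C") simp_all

lemma last_state_measurable:
  assumes st: "st \<in> N \<rightarrow>\<^sub>M S"
  shows "(\<lambda>(\<omega>, v). last_state (st \<omega>) v m) \<in> N \<Otimes>\<^sub>M path_space S B m \<rightarrow>\<^sub>M S"
proof (cases "m = 0")
  case True
  then show ?thesis
    using measurable_compose[OF measurable_fst st] by (simp add: last_state_def case_prod_beta')
next
  case False
  then have "m - 1 \<in> {..<m}" by simp
  then have "(\<lambda>z. fst (snd z (m - 1))) \<in> N \<Otimes>\<^sub>M path_space S B m \<rightarrow>\<^sub>M S" by measurable
  then show ?thesis using False by (simp add: last_state_def case_prod_beta')
qed

lemma nn_integral_last_step_measurable:
  assumes K: "K \<in> S \<rightarrow>\<^sub>M subprob_algebra (S \<Otimes>\<^sub>M B)" and st: "st \<in> N \<rightarrow>\<^sub>M S"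
    and g: "case_prod g \<in> borel_measurable (N \<Otimes>\<^sub>M path_space S B (Suc m))"
  shows "(\<lambda>(\<omega>, v). \<integral>\<^sup>+y. g \<omega> (v(m := y)) \<partial>K (last_state (st \<omega>) v m))
    \<in> borel_measurable (N \<Otimes>\<^sub>M path_space S B m)"
proof -
  have "(\<lambda>(z, y). (fst z, (snd z)(m := y)))
      \<in> (N \<Otimes>\<^sub>M path_space S B m) \<Otimes>\<^sub>M (S \<Otimes>\<^sub>M B) \<rightarrow>\<^sub>M N \<Otimes>\<^sub>M path_space S B (Suc m)"
    by (simp add: case_prod_beta' lessThan_Suc) measurable
  from measurable_compose[OF this g]
  have "(\<lambda>(z, y). g (fst z) ((snd z)(m := y)))
      \<in> borel_measurable ((N \<Otimes>\<^sub>M path_space S B m) \<Otimes>\<^sub>M (S \<Otimes>\<^sub>M B))"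
    by (simp add: case_prod_beta')
  from nn_integral_measurable_subprob_algebra2[OF this measurable_compose[OF last_state_measurable[OF st] K]]
  show ?thesis by (simp add: case_prod_beta')
qed

lemma iter_kernel_measurable:
  assumes K: "K \<in> S \<rightarrow>\<^sub>M subprob_algebra (S \<Otimes>\<^sub>M B)" and st: "st \<in> N \<rightarrow>\<^sub>M S"
    and g: "case_prod g \<in> borel_measurable (N \<Otimes>\<^sub>M path_space S B m)"
  shows "(\<lambda>\<omega>. iter_kernel K m (g \<omega>) (st \<omega>)) \<in> borel_measurable N"
  using g
proof (induction m arbitrary: g)
  case 0
  have "(\<lambda>_. undefined) \<in> space (path_space S B 0)" by (simp add: space_PiM)
  from measurable_compose[OF measurable_Pair2'[OF this] "0"] show ?case by simp
next
  case (Suc m)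
  from Suc.IH[OF nn_integral_last_step_measurable[OF K st Suc.prems]]
  show ?case by (simp add: fun_upd_def)
qed

section \<open>Perpetuity sums\<close>

definition perp_sum :: "nat \<Rightarrow> (nat \<Rightarrow> 's \<times> real \<times> real) \<Rightarrow> real" where
  "perp_sum m v = (\<Sum>i<m. fst (snd (v i)) * (\<Prod>j<i. snd (snd (v j))))"

lemma perp_sum_restrict:
  "perp_sum m (restrict f {..<m}) = (\<Sum>i<m. fst (snd (f i)) * (\<Prod>j<i. snd (snd (f j))))"
  unfolding perp_sum_def by (intro sum.cong refl arg_cong2[where f="(*)"] prod.cong) auto

lemma perp_sum_measurable [measurable]:
  "perp_sum m \<in> borel_measurable (path_space S (borel :: (real \<times> real) measure) m)"
proof -
  have [measurable]: "fst \<in> borel_measurable (borel :: (real \<times> real) measure)"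
    "snd \<in> borel_measurable (borel :: (real \<times> real) measure)"
    by (simp_all add: borel_prod[symmetric])
  show ?thesis unfolding perp_sum_def by measurable
qed

lemma PiR_0 [simp]: "PiR Rho 0 \<omega> = 1"
  by (simp add: PiR_def)

lemma Rpart_0 [simp]: "Rpart Xi Rho 0 \<omega> = 0"
  by (simp add: Rpart_def)

lemma PiR_add: "PiR Rho (n + m) \<omega> = PiR Rho n \<omega> * (\<Prod>j<m. Rho (int (n + j)) \<omega>)"
  by (induction m) (auto simp: PiR_def ac_simps)

lemma Rpart_add:
  "Rpart Xi Rho (n + m) \<omega> =
    Rpart Xi Rho n \<omega> + PiR Rho n \<omega> * (\<Sum>i<m. Xi (int (n + i)) \<omega> * (\<Prod>j<i. Rho (int (n + j)) \<omega>))"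
proof (induction m)
  case (Suc m)
  have "Rpart Xi Rho (n + Suc m) \<omega> = Rpart Xi Rho (n + m) \<omega> + Xi (int (n + m)) \<omega> * PiR Rho (n + m) \<omega>"
    by (simp add: Rpart_def)
  also have "PiR Rho (n + m) \<omega> = PiR Rho n \<omega> * (\<Prod>j<m. Rho (int (n + j)) \<omega>)" by (rule PiR_add)
  also note Suc
  finally show ?case by (simp add: distrib_left mult.assoc mult.commute mult.left_commute)
qed simp

lemma Rpart_tendsto_Rfull:
  assumes "summable (Rser_term Xi Rho \<omega>)"
  shows "(\<lambda>m. Rpart Xi Rho m \<omega>) \<longlonglongrightarrow> Rfull Xi Rho \<omega>"
proof -
  have partial_sums: "Rpart Xi Rho (Suc m) \<omega> = Xi 0 \<omega> + (\<Sum>i<m. Rser_term Xi Rho \<omega> i)" for m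
    unfolding Rpart_def Rser_term_def sum.lessThan_Suc_shift by simp
  have "(\<lambda>m. Xi 0 \<omega> + (\<Sum>i<m. Rser_term Xi Rho \<omega> i)) \<longlonglongrightarrow> Rfull Xi Rho \<omega>"
    unfolding Rfull_def by (intro tendsto_add tendsto_const summable_LIMSEQ assms)
  then show ?thesis unfolding partial_sums[symmetric] by (rule LIMSEQ_imp_Suc)
qed

section \<open>Markov-modulated processes\<close>

text \<open>step_kernel S H G x is the joint law of (x_n, (\<xi>_n, \<rho>_n)) given x_(n-1) = x.\<close>

definition step_kernel ::
  "'s measure \<Rightarrow> ('s \<Rightarrow> 's measure) \<Rightarrow> ('s \<Rightarrow> 's \<Rightarrow> (real \<times> real) measure) \<Rightarrow> 's \<Rightarrow> ('s \<times> real \<times> real) measure"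
  where "step_kernel S H G x = H x \<bind> (\<lambda>y. distr (G x y) (S \<Otimes>\<^sub>M borel) (Pair y))"

locale markov_modulated = prob_space P for P :: "'w measure" +
  fixes S :: "'s measure" and X :: "int \<Rightarrow> 'w \<Rightarrow> 's" and Xi Rho :: "int \<Rightarrow> 'w \<Rightarrow> real"
    and H :: "'s \<Rightarrow> 's measure" and G :: "'s \<Rightarrow> 's \<Rightarrow> (real \<times> real) measure"
  assumes X_measurable [measurable]: "\<And>i. X i \<in> P \<rightarrow>\<^sub>M S"
    and Xi_measurable [measurable]: "\<And>i. Xi i \<in> borel_measurable P"
    and Rho_measurable [measurable]: "\<And>i. Rho i \<in> borel_measurable P"
    and H_kernel: "H \<in> S \<rightarrow>\<^sub>M prob_algebra S"
    and G_kernel: "(\<lambda>(x, y). G x y) \<in> S \<Otimes>\<^sub>M S \<rightarrow>\<^sub>M prob_algebra (borel :: (real \<times> real) measure)"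
    and markov: "\<And>n::nat. markov_step P S H G X Xi Rho (int n)"
begin

abbreviation step_space :: "('s \<times> real \<times> real) measure" where
  "step_space \<equiv> S \<Otimes>\<^sub>M borel"

definition past :: "nat \<Rightarrow> 'w measure" where
  "past n = proc_sigma P S X Xi Rho {..<int n}"

definition Y :: "int \<Rightarrow> 'w \<Rightarrow> 's \<times> real \<times> real" where
  "Y k \<omega> = (X k \<omega>, Xi k \<omega>, Rho k \<omega>)"

definition future :: "nat \<Rightarrow> nat \<Rightarrow> 'w \<Rightarrow> nat \<Rightarrow> 's \<times> real \<times> real" where
  "future n m \<omega> = restrict (\<lambda>j. Y (int (n + j)) \<omega>) {..<m}"

lemma sets_past:
  "sets (past n) = sigma_sets (space P)
     ({{\<omega> \<in> space P. X i \<omega> \<in> A} | i A. i \<in> {..<int n} \<and> A \<in> sets S} \<union>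
      {{\<omega> \<in> space P. (Xi i \<omega>, Rho i \<omega>) \<in> B} | i B.
        i \<in> {..<int n} \<and> B \<in> sets (borel :: (real \<times> real) measure)})"
  unfolding past_def proc_sigma_def by (rule sets_measure_of) auto

lemma space_past [simp]: "space (past n) = space P"
  unfolding past_def proc_sigma_def by (simp add: space_measure_of_conv)

lemma X_preimage_in_past: "i < int n \<Longrightarrow> A \<in> sets S \<Longrightarrow> {\<omega> \<in> space P. X i \<omega> \<in> A} \<in> sets (past n)"
  unfolding sets_past by (rule sigma_sets.Basic) auto

lemma XiRho_preimage_in_past:
  "i < int n \<Longrightarrow> B \<in> sets (borel :: (real \<times> real) measure) \<Longrightarrow>
    {\<omega> \<in> space P. (Xi i \<omega>, Rho i \<omega>) \<in> B} \<in> sets (past n)"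
  unfolding sets_past by (rule sigma_sets.Basic) auto

lemma sets_past_subset: "sets (past n) \<subseteq> sets P"
  unfolding sets_past by (rule sets.sigma_sets_subset) auto

lemma sets_past_mono: "n \<le> n' \<Longrightarrow> sets (past n) \<subseteq> sets (past n')"
  unfolding sets_past[of n]
  by (rule sets.sigma_sets_subset[of _ "past n'", simplified])
     (auto intro: X_preimage_in_past XiRho_preimage_in_past)

lemma subalgebra_past: "subalgebra P (past n)"
  using sets_past_subset by (simp add: subalgebra_def)

lemma X_past_measurable: "i < int n \<Longrightarrow> X i \<in> past n \<rightarrow>\<^sub>M S"
  by (rule measurableI) (auto simp: vimage_def Int_def conj_commute measurable_space[OF X_measurable]
      intro: X_preimage_in_past)

lemma XiRho_past_measurable:
  "i < int n \<Longrightarrow> (\<lambda>\<omega>. (Xi i \<omega>, Rho i \<omega>)) \<in> past n \<rightarrow>\<^sub>M (borel :: (real \<times> real) measure)"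
  by (rule measurableI) (auto simp: vimage_def Int_def conj_commute intro: XiRho_preimage_in_past)

lemma
  assumes "i < int n"
  shows Xi_past_measurable: "Xi i \<in> borel_measurable (past n)"
    and Rho_past_measurable: "Rho i \<in> borel_measurable (past n)"
proof -
  have "(\<lambda>\<omega>. (Xi i \<omega>, Rho i \<omega>)) \<in> past n \<rightarrow>\<^sub>M borel \<Otimes>\<^sub>M borel"
    using XiRho_past_measurable[OF assms] by (simp add: borel_prod)
  from measurable_compose[OF this measurable_fst] measurable_compose[OF this measurable_snd]
  show "Xi i \<in> borel_measurable (past n)" "Rho i \<in> borel_measurable (past n)" by simp_all
qed

lemma PiR_past_measurable: "j \<le> n \<Longrightarrow> PiR Rho j \<in> borel_measurable (past n)"
  unfolding PiR_def by (intro borel_measurable_prod Rho_past_measurable) auto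

lemma Rpart_past_measurable: "j \<le> n \<Longrightarrow> Rpart Xi Rho j \<in> borel_measurable (past n)"
  unfolding Rpart_def
  by (intro borel_measurable_sum borel_measurable_times Xi_past_measurable PiR_past_measurable) auto

lemma Y_past_measurable: "i < int n \<Longrightarrow> Y i \<in> past n \<rightarrow>\<^sub>M step_space"
  unfolding Y_def by (intro measurable_Pair X_past_measurable XiRho_past_measurable)

lemma Y_measurable [measurable]: "Y i \<in> P \<rightarrow>\<^sub>M step_space"
  unfolding Y_def by measurable

lemma future_past_measurable: "future n m \<in> past (n + m) \<rightarrow>\<^sub>M path_space S borel m"
  unfolding future_def by (intro measurable_restrict Y_past_measurable) auto

lemma H_prob_space: "x \<in> space S \<Longrightarrow> prob_space (H x)"
  and sets_H: "x \<in> space S \<Longrightarrow> sets (H x) = sets S"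
  using measurable_space[OF H_kernel] by (auto simp: space_prob_algebra)

lemma G_prob_space: "x \<in> space S \<Longrightarrow> y \<in> space S \<Longrightarrow> prob_space (G x y)"
  using measurable_space[OF G_kernel, of "(x, y)"] by (auto simp: space_prob_algebra space_pair_measure)

lemma G_measurable [measurable]: "x \<in> space S \<Longrightarrow> G x \<in> S \<rightarrow>\<^sub>M subprob_algebra borel"
  using measurable_Pair2[OF measurable_prob_algebraD[OF G_kernel]] by simp

lemma distr_G_measurable:
  "(\<lambda>(x, y). distr (G x y) step_space (Pair y)) \<in> S \<Otimes>\<^sub>M S \<rightarrow>\<^sub>M subprob_algebra step_space"
  using measurable_distr2[OF _ measurable_prob_algebraD[OF G_kernel], of "\<lambda>(x, y). Pair y" step_space]
  by (simp add: case_prod_beta')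

lemma step_kernel_measurable [measurable]: "step_kernel S H G \<in> S \<rightarrow>\<^sub>M subprob_algebra step_space"
  using measurable_bind'[OF measurable_prob_algebraD[OF H_kernel] distr_G_measurable]
  unfolding step_kernel_def[abs_def] by (simp add: case_prod_beta')

lemma subprob_space_step_kernel: "x \<in> space S \<Longrightarrow> subprob_space (step_kernel S H G x)"
  by (rule subprob_space_kernel[OF step_kernel_measurable])

lemma emeasure_step_kernel_rect:
  assumes x: "x \<in> space S" and A: "A \<in> sets S" and B: "B \<in> sets (borel :: (real \<times> real) measure)"
  shows "emeasure (step_kernel S H G x) (A \<times> B) = (\<integral>\<^sup>+y. indicator A y * emeasure (G x y) B \<partial>H x)"
proof -
  have "(\<lambda>y. distr (G x y) step_space (Pair y)) \<in> H x \<rightarrow>\<^sub>M subprob_algebra step_space"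
    using measurable_Pair2[OF distr_G_measurable x] by (simp add: measurable_cong_sets[OF sets_H[OF x] refl])
  then have "emeasure (step_kernel S H G x) (A \<times> B) =
      (\<integral>\<^sup>+y. emeasure (distr (G x y) step_space (Pair y)) (A \<times> B) \<partial>H x)"
    unfolding step_kernel_def using A B prob_space.not_empty[OF H_prob_space[OF x]]
    by (intro emeasure_bind) auto
  also have "\<dots> = (\<integral>\<^sup>+y. indicator A y * emeasure (G x y) B \<partial>H x)"
    using A B sets_eq_imp_space_eq[OF sets_H[OF x]]
    by (intro nn_integral_cong)
      (simp add: emeasure_distr_Pair_kernel_rect[OF _ G_measurable[OF x]] subalgebra_def)
  finally show ?thesis .
qed

lemma measure_step_kernel_rect:
  assumes x: "x \<in> space S" and A: "A \<in> sets S" and B: "B \<in> sets (borel :: (real \<times> real) measure)"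
  shows "measure (step_kernel S H G x) (A \<times> B) = (\<integral>y. indicator A y * measure (G x y) B \<partial>H x)"
proof -
  have "(\<lambda>y. indicator A y * measure (G x y) B) \<in> borel_measurable (H x)"
    using A B x by (simp add: measurable_cong_sets[OF sets_H[OF x] refl]) measurable
  then have "(\<integral>y. indicator A y * measure (G x y) B \<partial>H x) =
      enn2real (\<integral>\<^sup>+y. ennreal (indicator A y * measure (G x y) B) \<partial>H x)"
    by (rule integral_eq_nn_integral) simp
  also have "(\<integral>\<^sup>+y. ennreal (indicator A y * measure (G x y) B) \<partial>H x) =
      emeasure (step_kernel S H G x) (A \<times> B)"
  proof -
    have "(\<integral>\<^sup>+y. ennreal (indicator A y * measure (G x y) B) \<partial>H x) =
        (\<integral>\<^sup>+y. indicator A y * emeasure (G x y) B \<partial>H x)"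
    proof (rule nn_integral_cong)
      fix y assume "y \<in> space (H x)"
      then have y: "y \<in> space S" using sets_eq_imp_space_eq[OF sets_H[OF x]] by simp
      interpret Gxy: prob_space "G x y" by (rule G_prob_space[OF x y])
      show "ennreal (indicator A y * measure (G x y) B) = indicator A y * emeasure (G x y) B"
        by (simp add: Gxy.emeasure_eq_measure indicator_def)
    qed
    then show ?thesis by (simp add: emeasure_step_kernel_rect[OF assms])
  qed
  finally show ?thesis by (simp add: measure_def)
qed

lemma emeasure_past_Int_Y:
  assumes C: "C \<in> sets (past k)" and A: "A \<in> sets S" and B: "B \<in> sets (borel :: (real \<times> real) measure)"
  shows "emeasure P (C \<inter> Y (int k) -` (A \<times> B)) =
    (\<integral>\<^sup>+\<omega>. indicator C \<omega> * emeasure (step_kernel S H G (X (int k - 1) \<omega>)) (A \<times> B) \<partial>P)"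
proof -
  let ?q = "\<lambda>\<omega>. measure (step_kernel S H G (X (int k - 1) \<omega>)) (A \<times> B)"
  have CP: "C \<in> sets P" using C sets_past_subset by auto
  have X_space: "\<omega> \<in> space P \<Longrightarrow> X (int k - 1) \<omega> \<in> space S" for \<omega>
    using measurable_space[OF X_measurable] by simp
  have AB: "A \<times> B \<in> sets step_space" using A B by simp
  have "C \<inter> Y (int k) -` (A \<times> B) = {\<omega> \<in> space P. X (int k) \<omega> \<in> A \<and> (Xi (int k) \<omega>, Rho (int k) \<omega>) \<in> B} \<inter> C"
    using sets.sets_into_space[OF CP] by (auto simp: Y_def)
  then have "emeasure P (C \<inter> Y (int k) -` (A \<times> B)) =
      measure P ({\<omega> \<in> space P. X (int k) \<omega> \<in> A \<and> (Xi (int k) \<omega>, Rho (int k) \<omega>) \<in> B} \<inter> C)"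
    by (simp add: emeasure_eq_measure)
  also have "\<dots> = (\<integral>\<omega>. indicator C \<omega> * ?q \<omega> \<partial>P)"
    using markov[of k] A B C X_space
    by (simp add: markov_step_def past_def measure_step_kernel_rect cong: Bochner_Integration.integral_cong)
  also have "\<dots> = (\<integral>\<^sup>+\<omega>. ennreal (indicator C \<omega> * ?q \<omega>) \<partial>P)"
  proof (rule nn_integral_eq_integral[symmetric])
    have "?q \<in> borel_measurable P" using AB by measurable
    then show "integrable P (\<lambda>\<omega>. indicator C \<omega> * ?q \<omega>)"
      using CP X_space subprob_space.subprob_measure_le_1[OF subprob_space_step_kernel]
      by (intro integrable_const_bound[where B=1]) (auto simp: indicator_def)
  qed simp
  also have "\<dots> = (\<integral>\<^sup>+\<omega>. indicator C \<omega> * emeasure (step_kernel S H G (X (int k - 1) \<omega>)) (A \<times> B) \<partial>P)"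
  proof (rule nn_integral_cong)
    fix \<omega> assume "\<omega> \<in> space P"
    then interpret K: subprob_space "step_kernel S H G (X (int k - 1) \<omega>)"
      by (intro subprob_space_step_kernel X_space)
    show "ennreal (indicator C \<omega> * ?q \<omega>) =
        indicator C \<omega> * emeasure (step_kernel S H G (X (int k - 1) \<omega>)) (A \<times> B)"
      by (simp add: K.emeasure_eq_measure indicator_def)
  qed
  finally show ?thesis .
qed

lemma nn_integral_Y_eq_step_kernel:
  assumes g: "case_prod g \<in> borel_measurable (past k \<Otimes>\<^sub>M step_space)"
  shows "(\<integral>\<^sup>+\<omega>. g \<omega> (Y (int k) \<omega>) \<partial>P) = (\<integral>\<^sup>+\<omega>. \<integral>\<^sup>+y. g \<omega> y \<partial>step_kernel S H G (X (int k - 1) \<omega>) \<partial>P)"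
proof -
  let ?E = "{A \<times> B | A B. A \<in> sets S \<and> B \<in> sets (borel :: (real \<times> real) measure)}"
  show ?thesis
  proof (rule nn_integral_disintegration[OF prob_space_axioms subalgebra_past Y_measurable _ _ _ _ _ _ g,
        where E="?E"])
    show "(\<lambda>\<omega>. step_kernel S H G (X (int k - 1) \<omega>)) \<in> P \<rightarrow>\<^sub>M subprob_algebra step_space" by measurable
    show "?E \<subseteq> Pow (space step_space)"
      using sets.sets_into_space by (fastforce simp: space_pair_measure)
    show "sets step_space = sigma_sets (space step_space) ?E"
      by (simp add: sets_pair_measure space_pair_measure)
    show "Int_stable ?E" by (rule Int_stable_pair_measure_generator)
    show "space step_space \<in> ?E"
      by (rule CollectI, rule exI[of _ "space S"], rule exI[of _ UNIV]) (simp add: space_pair_measure)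
    fix C R assume "C \<in> sets (past k)" "R \<in> ?E"
    then show "emeasure P (C \<inter> Y (int k) -` R) =
        (\<integral>\<^sup>+\<omega>. indicator C \<omega> * emeasure (step_kernel S H G (X (int k - 1) \<omega>)) R \<partial>P)"
      using emeasure_past_Int_Y by blast
  qed
qed

lemma past_ident_measurable: "n \<le> n' \<Longrightarrow> (\<lambda>\<omega>. \<omega>) \<in> past n' \<rightarrow>\<^sub>M past n"
  using sets_past_mono[of n n'] sets.sets_into_space[of _ "past n"]
  by (intro measurableI) (auto simp: subset_eq Int_absorb2)

lemma future_Suc: "future n (Suc m) \<omega> = (future n m \<omega>)(m := Y (int (n + m)) \<omega>)"
  by (auto simp: future_def fun_eq_iff)

lemma last_state_future: "last_state (X (int n - 1) \<omega>) (future n m \<omega>) m = X (int (n + m) - 1) \<omega>"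
  by (cases m) (simp_all add: last_state_def future_def Y_def)

lemma nn_integral_future_eq_iter_kernel:
  assumes "case_prod g \<in> borel_measurable (past n \<Otimes>\<^sub>M path_space S borel m)"
  shows "(\<integral>\<^sup>+\<omega>. g \<omega> (future n m \<omega>) \<partial>P) =
    (\<integral>\<^sup>+\<omega>. iter_kernel (step_kernel S H G) m (g \<omega>) (X (int n - 1) \<omega>) \<partial>P)"
  using assms
proof (induction m arbitrary: g)
  case 0
  then show ?case by (simp add: future_def)
next
  case (Suc m)
  let ?Q = "step_kernel S H G"
  have "(\<lambda>(\<omega>, y). (\<omega>, (future n m \<omega>)(m := y)))
      \<in> past (n + m) \<Otimes>\<^sub>M step_space \<rightarrow>\<^sub>M past n \<Otimes>\<^sub>M path_space S borel (Suc m)"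
    using past_ident_measurable[of n "n + m"] future_past_measurable[of n m]
    by (simp add: case_prod_beta' lessThan_Suc) measurable
  from measurable_compose[OF this Suc.prems]
  have "(\<lambda>(\<omega>, y). g \<omega> ((future n m \<omega>)(m := y))) \<in> borel_measurable (past (n + m) \<Otimes>\<^sub>M step_space)"
    by (simp add: case_prod_beta')
  from nn_integral_Y_eq_step_kernel[OF this]
  have "(\<integral>\<^sup>+\<omega>. g \<omega> (future n (Suc m) \<omega>) \<partial>P) =
      (\<integral>\<^sup>+\<omega>. (\<lambda>\<omega> v. \<integral>\<^sup>+y. g \<omega> (v(m := y)) \<partial>?Q (last_state (X (int n - 1) \<omega>) v m)) \<omega> (future n m \<omega>) \<partial>P)"
    by (simp add: future_Suc last_state_future)
  also have "\<dots> = (\<integral>\<^sup>+\<omega>. iter_kernel ?Q (Suc m) (g \<omega>) (X (int n - 1) \<omega>) \<partial>P)"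
    using Suc.IH[OF nn_integral_last_step_measurable[OF step_kernel_measurable
          X_past_measurable[of "int n - 1"] Suc.prems]]
    by (simp add: fun_upd_def)
  finally show ?case .
qed

lemma iter_kernel_eq_nn_integral_future:
  assumes x: "x \<in> space S" and start: "AE \<omega> in P. X (-1) \<omega> = x"
    and h: "h \<in> borel_measurable (path_space S borel m)"
  shows "iter_kernel (step_kernel S H G) m h x = (\<integral>\<^sup>+\<omega>. h (future 0 m \<omega>) \<partial>P)"
proof -
  have "(\<lambda>(\<omega>, v). h v) \<in> borel_measurable (past 0 \<Otimes>\<^sub>M path_space S borel m)"
    using measurable_compose[OF measurable_snd h] by (simp add: case_prod_beta')
  from nn_integral_future_eq_iter_kernel[OF this]
  have "(\<integral>\<^sup>+\<omega>. h (future 0 m \<omega>) \<partial>P) = (\<integral>\<^sup>+\<omega>. iter_kernel (step_kernel S H G) m h (X (-1) \<omega>) \<partial>P)"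
    by simp
  also have "\<dots> = (\<integral>\<^sup>+\<omega>. iter_kernel (step_kernel S H G) m h x \<partial>P)"
    using start by (intro nn_integral_cong_AE) auto
  finally show ?thesis by (simp add: emeasure_space_1)
qed

lemma Rpart_eq_perp_sum_future: "Rpart Xi Rho m \<omega> = perp_sum m (future 0 m \<omega>)"
  using Rpart_add[of Xi Rho 0 m \<omega>] by (simp add: future_def perp_sum_restrict Y_def)

lemma PiR_mult_perp_sum_future_tendsto:
  assumes "summable (Rser_term Xi Rho \<omega>)"
  shows "(\<lambda>m. PiR Rho k \<omega> * perp_sum m (future k m \<omega>)) \<longlonglongrightarrow> Rfull Xi Rho \<omega> - Rpart Xi Rho k \<omega>"
proof -
  have "PiR Rho k \<omega> * perp_sum m (future k m \<omega>) = Rpart Xi Rho (m + k) \<omega> - Rpart Xi Rho k \<omega>" for m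
    using Rpart_add[of Xi Rho k m \<omega>] by (simp add: future_def perp_sum_restrict Y_def add.commute)
  moreover have "(\<lambda>m. Rpart Xi Rho (m + k) \<omega>) \<longlonglongrightarrow> Rfull Xi Rho \<omega>"
    using LIMSEQ_ignore_initial_segment[OF Rpart_tendsto_Rfull[OF assms]] .
  ultimately show ?thesis by (simp add: tendsto_diff)
qed

lemma emeasure_le_liminf_iter_kernel:
  assumes x: "x \<in> space S" and start: "AE \<omega> in P. X (-1) \<omega> = x"
    and lim: "AE \<omega> in P. (\<lambda>m. Rpart Xi Rho m \<omega>) \<longlonglongrightarrow> R \<omega>"
    and R: "R \<in> borel_measurable P" and \<delta>: "0 < \<delta>"
  shows "emeasure P {\<omega> \<in> space P. \<sigma> * c \<le> \<sigma> * R \<omega>}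
    \<le> liminf (\<lambda>m. iter_kernel (step_kernel S H G) m (\<lambda>v. of_bool (\<sigma> * c - \<delta> \<le> \<sigma> * perp_sum m v)) x)"
proof -
  let ?u = "\<lambda>m \<omega>. of_bool (\<sigma> * c - \<delta> \<le> \<sigma> * Rpart Xi Rho m \<omega>) :: ennreal"
  have u_measurable: "?u m \<in> borel_measurable P" for m
    unfolding Rpart_def PiR_def by measurable
  have "{\<omega> \<in> space P. \<sigma> * c \<le> \<sigma> * R \<omega>} \<in> sets P" using R by measurable
  then have "emeasure P {\<omega> \<in> space P. \<sigma> * c \<le> \<sigma> * R \<omega>} = (\<integral>\<^sup>+\<omega>. of_bool (\<sigma> * c \<le> \<sigma> * R \<omega>) \<partial>P)"
    by (simp add: nn_integral_indicator[symmetric] indicator_def cong: nn_integral_cong)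
  also have "\<dots> \<le> (\<integral>\<^sup>+\<omega>. liminf (\<lambda>m. ?u m \<omega>) \<partial>P)"
    using lim
  proof (intro nn_integral_mono_AE, eventually_elim)
    case (elim \<omega>)
    then show ?case by (intro of_bool_le_liminf tendsto_mult_left \<delta>)
  qed
  also have "\<dots> \<le> liminf (\<lambda>m. \<integral>\<^sup>+\<omega>. ?u m \<omega> \<partial>P)"
    by (rule nn_integral_liminf[OF u_measurable])
  also have "(\<lambda>m. \<integral>\<^sup>+\<omega>. ?u m \<omega> \<partial>P) =
      (\<lambda>m. iter_kernel (step_kernel S H G) m (\<lambda>v. of_bool (\<sigma> * c - \<delta> \<le> \<sigma> * perp_sum m v)) x)"
  proof
    fix m
    have "(\<lambda>v. of_bool (\<sigma> * c - \<delta> \<le> \<sigma> * perp_sum m v) :: ennreal) \<in> borel_measurable (path_space S borel m)"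
      by measurable
    then show "(\<integral>\<^sup>+\<omega>. ?u m \<omega> \<partial>P) =
        iter_kernel (step_kernel S H G) m (\<lambda>v. of_bool (\<sigma> * c - \<delta> \<le> \<sigma> * perp_sum m v)) x"
      by (simp add: iter_kernel_eq_nn_integral_future[OF x start] Rpart_eq_perp_sum_future)
  qed
  finally show ?thesis .
qed

lemma half_emeasure_le_liminf_future:
  fixes \<phi> :: "nat \<Rightarrow> 'w \<Rightarrow> (nat \<Rightarrow> 's \<times> real \<times> real) \<Rightarrow> bool"
  assumes C: "C \<in> sets (past n)"
    and \<phi>: "\<And>m. Measurable.pred (past n \<Otimes>\<^sub>M path_space S borel m) (\<lambda>(\<omega>, v). \<phi> m \<omega> v)"
    and half: "\<And>\<omega>. \<omega> \<in> C \<Longrightarrow>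
      1/2 \<le> liminf (\<lambda>m. iter_kernel (step_kernel S H G) m (\<lambda>v. of_bool (\<phi> m \<omega> v)) (X (int n - 1) \<omega>))"
  shows "1/2 * emeasure P C \<le> liminf (\<lambda>m. \<integral>\<^sup>+\<omega>. indicator C \<omega> * of_bool (\<phi> m \<omega> (future n m \<omega>)) \<partial>P)"
proof -
  have CP: "C \<in> sets P" using C sets_past_subset by auto
  define g :: "nat \<Rightarrow> 'w \<Rightarrow> (nat \<Rightarrow> 's \<times> real \<times> real) \<Rightarrow> ennreal"
    where "g m \<omega> v = indicator C \<omega> * of_bool (\<phi> m \<omega> v)" for m \<omega> v
  have g_measurable: "case_prod (g m) \<in> borel_measurable (past n \<Otimes>\<^sub>M path_space S borel m)" for m
  proof -
    have [measurable]: "Measurable.pred (past n) (\<lambda>\<omega>. \<omega> \<in> C)" by (rule pred_sets2[OF C measurable_id])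
    show ?thesis using \<phi>[of m] by (simp add: g_def indicator_def case_prod_beta') measurable
  qed
  let ?I = "\<lambda>m \<omega>. iter_kernel (step_kernel S H G) m (g m \<omega>) (X (int n - 1) \<omega>)"
  have iter_g: "?I m \<omega> =
      indicator C \<omega> * iter_kernel (step_kernel S H G) m (\<lambda>v. of_bool (\<phi> m \<omega> v)) (X (int n - 1) \<omega>)"
    for m \<omega> unfolding g_def by (rule iter_kernel_indicator_mult)
  have I_measurable: "?I m \<in> borel_measurable P" for m
    using measurable_from_subalg[OF subalgebra_past
        iter_kernel_measurable[OF step_kernel_measurable X_past_measurable[of "int n - 1"] g_measurable]]
    by simp
  have "1/2 * emeasure P C = (\<integral>\<^sup>+\<omega>. 1/2 * indicator C \<omega> \<partial>P)"
    by (rule nn_integral_cmult_indicator[OF CP, symmetric])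
  also have "\<dots> \<le> (\<integral>\<^sup>+\<omega>. liminf (\<lambda>m. ?I m \<omega>) \<partial>P)"
  proof (rule nn_integral_mono)
    fix \<omega> show "1/2 * indicator C \<omega> \<le> liminf (\<lambda>m. ?I m \<omega>)"
      using half[of \<omega>] by (cases "\<omega> \<in> C") (simp_all add: iter_g)
  qed
  also have "\<dots> \<le> liminf (\<lambda>m. \<integral>\<^sup>+\<omega>. ?I m \<omega> \<partial>P)"
    by (rule nn_integral_liminf[OF I_measurable])
  also have "\<dots> = liminf (\<lambda>m. \<integral>\<^sup>+\<omega>. g m \<omega> (future n m \<omega>) \<partial>P)"
    by (simp add: nn_integral_future_eq_iter_kernel[OF g_measurable])
  finally show ?thesis by (simp add: g_def)
qed

text \<open>The \<delta>-slack is needed on the kernel side, where only liminf bounds for the open events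
  are available; on the side of P the limit event is closed and the reverse Fatou lemma applies.\<close>

lemma half_emeasure_le_emeasure_limit_slack:
  fixes \<sigma> c \<Lambda> :: "'w \<Rightarrow> real"
  assumes C: "C \<in> sets (past n)" and \<sigma>: "\<sigma> \<in> borel_measurable (past n)" and c: "c \<in> borel_measurable (past n)"
    and \<Lambda>: "\<Lambda> \<in> borel_measurable P"
    and lim: "AE \<omega> in P. \<omega> \<in> C \<longrightarrow> (\<lambda>m. \<sigma> \<omega> * perp_sum m (future n m \<omega>)) \<longlonglongrightarrow> \<Lambda> \<omega>"
    and half: "\<And>\<omega>. \<omega> \<in> C \<Longrightarrow> 1/2 \<le> liminf (\<lambda>m. iter_kernel (step_kernel S H G) m
        (\<lambda>v. of_bool (\<sigma> \<omega> * c \<omega> - \<delta> \<le> \<sigma> \<omega> * perp_sum m v)) (X (int n - 1) \<omega>))"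
  shows "1/2 * emeasure P C \<le> emeasure P {\<omega> \<in> C. \<sigma> \<omega> * c \<omega> - \<delta> \<le> \<Lambda> \<omega>}"
proof -
  have CP: "C \<in> sets P" using C sets_past_subset by auto
  have [measurable]: "\<sigma> \<in> borel_measurable P" "c \<in> borel_measurable P"
    "\<And>m. future n m \<in> P \<rightarrow>\<^sub>M path_space S borel m"
    using \<sigma> c future_past_measurable by (auto intro: measurable_from_subalg[OF subalgebra_past])
  let ?u = "\<lambda>m \<omega>. indicator C \<omega> * of_bool (\<sigma> \<omega> * c \<omega> - \<delta> \<le> \<sigma> \<omega> * perp_sum m (future n m \<omega>)) :: ennreal"
  have "1/2 * emeasure P C \<le> liminf (\<lambda>m. \<integral>\<^sup>+\<omega>. ?u m \<omega> \<partial>P)"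
    using half by (intro half_emeasure_le_liminf_future[OF C]) (use \<sigma> c in measurable)
  also have "\<dots> \<le> limsup (\<lambda>m. \<integral>\<^sup>+\<omega>. ?u m \<omega> \<partial>P)"
    by (rule Liminf_le_Limsup) simp
  also have "\<dots> \<le> (\<integral>\<^sup>+\<omega>. limsup (\<lambda>m. ?u m \<omega>) \<partial>P)"
    using CP by (intro nn_integral_limsup[where w="\<lambda>_. 1"]) (auto simp: emeasure_space_1 indicator_def)
  also have "\<dots> \<le> (\<integral>\<^sup>+\<omega>. indicator {\<omega> \<in> C. \<sigma> \<omega> * c \<omega> - \<delta> \<le> \<Lambda> \<omega>} \<omega> \<partial>P)"
    using lim
  proof (intro nn_integral_mono_AE, eventually_elim)
    case (elim \<omega>)
    show ?case
    proof (cases "\<omega> \<in> C")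
      case True
      with elim have "(\<lambda>m. \<sigma> \<omega> * perp_sum m (future n m \<omega>)) \<longlonglongrightarrow> \<Lambda> \<omega>" by simp
      from limsup_of_bool_le[OF this, of "\<sigma> \<omega> * c \<omega> - \<delta>"] True
      show ?thesis by (simp add: indicator_def)
    qed (simp add: Limsup_const)
  qed
  also have "\<dots> = emeasure P {\<omega> \<in> C. \<sigma> \<omega> * c \<omega> - \<delta> \<le> \<Lambda> \<omega>}"
    using \<Lambda> by (intro nn_integral_indicator sets_Collect_restrict[OF CP]) measurable
  finally show ?thesis .
qed

lemma half_emeasure_le_emeasure_limit:
  fixes \<sigma> c \<Lambda> :: "'w \<Rightarrow> real"
  assumes C: "C \<in> sets (past n)" and \<sigma>: "\<sigma> \<in> borel_measurable (past n)" and c: "c \<in> borel_measurable (past n)"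
    and \<Lambda>: "\<Lambda> \<in> borel_measurable P"
    and lim: "AE \<omega> in P. \<omega> \<in> C \<longrightarrow> (\<lambda>m. \<sigma> \<omega> * perp_sum m (future n m \<omega>)) \<longlonglongrightarrow> \<Lambda> \<omega>"
    and half: "\<And>\<omega> \<delta>. \<omega> \<in> C \<Longrightarrow> 0 < \<delta> \<Longrightarrow> 1/2 \<le> liminf (\<lambda>m. iter_kernel (step_kernel S H G) m
        (\<lambda>v. of_bool (\<sigma> \<omega> * c \<omega> - \<delta> \<le> \<sigma> \<omega> * perp_sum m v)) (X (int n - 1) \<omega>))"
  shows "1/2 * emeasure P C \<le> emeasure P {\<omega> \<in> C. \<sigma> \<omega> * c \<omega> \<le> \<Lambda> \<omega>}"
proof (rule le_emeasure_le_of_forall_pos)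
  show "C \<in> sets P" using C sets_past_subset by auto
  show "(\<lambda>\<omega>. \<sigma> \<omega> * c \<omega>) \<in> borel_measurable P"
    using \<sigma> c by (intro borel_measurable_times) (auto intro: measurable_from_subalg[OF subalgebra_past])
  show "\<And>\<delta>. 0 < \<delta> \<Longrightarrow> 1/2 * emeasure P C \<le> emeasure P {\<omega> \<in> C. \<sigma> \<omega> * c \<omega> - \<delta> \<le> \<Lambda> \<omega>}"
    using half by (intro half_emeasure_le_emeasure_limit_slack[OF C \<sigma> c \<Lambda> lim])
qed (rule \<Lambda>)

end

section \<open>Conditioning on the state before time 0\<close>

locale markov_modulated_family =
  fixes M :: "'w measure" and S :: "'s measure"
    and X :: "int \<Rightarrow> 'w \<Rightarrow> 's" and Xi Rho :: "int \<Rightarrow> 'w \<Rightarrow> real"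
    and H :: "'s \<Rightarrow> 's measure" and G :: "'s \<Rightarrow> 's \<Rightarrow> (real \<times> real) measure"
    and Pm :: "'s \<Rightarrow> 'w measure"
  assumes X_measurable [measurable]: "\<And>i. X i \<in> M \<rightarrow>\<^sub>M S"
    and Xi_measurable [measurable]: "\<And>i. Xi i \<in> borel_measurable M"
    and Rho_measurable [measurable]: "\<And>i. Rho i \<in> borel_measurable M"
    and H_kernel: "H \<in> S \<rightarrow>\<^sub>M prob_algebra S"
    and G_kernel: "(\<lambda>(x, y). G x y) \<in> S \<Otimes>\<^sub>M S \<rightarrow>\<^sub>M prob_algebra (borel :: (real \<times> real) measure)"
    and prob_space_Pm: "\<And>x. x \<in> space S \<Longrightarrow> prob_space (Pm x)"
    and sets_Pm: "\<And>x. x \<in> space S \<Longrightarrow> sets (Pm x) = sets M"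
    and measure_Pm_measurable: "\<And>E. E \<in> sets M \<Longrightarrow> (\<lambda>x. measure (Pm x) E) \<in> borel_measurable S"
    and Pm_start: "\<And>x. x \<in> space S \<Longrightarrow> AE \<omega> in Pm x. X (-1) \<omega> = x"
    and Pm_markov: "\<And>x n. x \<in> space S \<Longrightarrow> n \<ge> 0 \<Longrightarrow> markov_step (Pm x) S H G X Xi Rho n"
    and Pm_summable: "\<And>x. x \<in> space S \<Longrightarrow> AE \<omega> in Pm x. summable (Rser_term Xi Rho \<omega>)"
begin

abbreviation \<Gamma> :: "'s \<Rightarrow> real" where
  "\<Gamma> \<equiv> Gam Pm (Rfull Xi Rho)"

lemma space_Pm: "x \<in> space S \<Longrightarrow> space (Pm x) = space M"
  by (rule sets_eq_imp_space_eq[OF sets_Pm])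

lemma markov_modulated_Pm: "x \<in> space S \<Longrightarrow> markov_modulated (Pm x) S X Xi Rho H G"
  using prob_space_Pm Pm_markov H_kernel G_kernel
  by (intro markov_modulated.intro markov_modulated_axioms.intro)
    (simp_all add: measurable_cong_sets[OF sets_Pm refl])

lemma Rfull_measurable [measurable]: "Rfull Xi Rho \<in> borel_measurable M"
  unfolding Rfull_def[abs_def] Rser_term_def PiR_def by measurable

lemma Rfull_Pm_measurable: "x \<in> space S \<Longrightarrow> Rfull Xi Rho \<in> borel_measurable (Pm x)"
  by (simp add: measurable_cong_sets[OF sets_Pm refl])

lemma Gam_measurable: "\<Gamma> \<in> borel_measurable S"
proof (subst borel_measurable_iff_less, intro allI)
  fix c :: real
  let ?E = "\<lambda>q. {\<omega> \<in> space M. Rfull Xi Rho \<omega> \<le> q}"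
  have "{x \<in> space S. \<Gamma> x < c} = (\<Union>q \<in> \<rat> \<inter> {..<c}. {x \<in> space S. 1/2 < measure (Pm x) (?E q)})"
    using prob_space.upper_median_less_iff[OF prob_space_Pm Rfull_Pm_measurable]
    by (auto simp: Gam_eq_upper_median space_Pm)
  also have "\<dots> \<in> sets S"
  proof (intro sets.countable_UN' countable_Int1 countable_rat subsetI)
    fix A assume "A \<in> (\<lambda>q. {x \<in> space S. 1/2 < measure (Pm x) (?E q)}) ` (\<rat> \<inter> {..<c})"
    then obtain q where A: "A = {x \<in> space S. 1/2 < measure (Pm x) (?E q)}" by blast
    have [measurable]: "(\<lambda>x. measure (Pm x) (?E q)) \<in> borel_measurable S"
      by (intro measure_Pm_measurable) measurable
    show "A \<in> sets S" unfolding A by measurable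
  qed
  finally show "{x \<in> space S. \<Gamma> x < c} \<in> sets S" .
qed

lemma half_le_liminf_iter_kernel:
  assumes x: "x \<in> space S" and \<delta>: "0 < \<delta>"
  shows "1/2 \<le> liminf (\<lambda>m. iter_kernel (step_kernel S H G) m
    (\<lambda>v. of_bool (\<sigma> * \<Gamma> x - \<delta> \<le> \<sigma> * perp_sum m v)) x)"
proof -
  interpret Px: markov_modulated "Pm x" S X Xi Rho H G by (rule markov_modulated_Pm[OF x])
  have "1/2 \<le> Px.prob {\<omega> \<in> space (Pm x). \<sigma> * \<Gamma> x \<le> \<sigma> * Rfull Xi Rho \<omega>}"
    using Px.prob_scaled_upper_median[OF Rfull_Pm_measurable[OF x]] by (simp add: Gam_eq_upper_median)
  from ennreal_leI[OF this]
  have "1/2 \<le> emeasure (Pm x) {\<omega> \<in> space (Pm x). \<sigma> * \<Gamma> x \<le> \<sigma> * Rfull Xi Rho \<omega>}"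
    using ennreal_half_mult[of 1] by (simp add: Px.emeasure_eq_measure)
  also have "\<dots> \<le> liminf (\<lambda>m. iter_kernel (step_kernel S H G) m
      (\<lambda>v. of_bool (\<sigma> * \<Gamma> x - \<delta> \<le> \<sigma> * perp_sum m v)) x)"
    using Pm_summable[OF x]
    by (intro Px.emeasure_le_liminf_iter_kernel[OF x Pm_start[OF x] _ Rfull_Pm_measurable[OF x] \<delta>])
      (auto elim: eventually_mono intro: Rpart_tendsto_Rfull)
  finally show ?thesis .
qed

definition exceed :: "real \<Rightarrow> nat \<Rightarrow> 'w set" where
  "exceed t k = {\<omega> \<in> space M. t < \<bar>Rpart Xi Rho k \<omega> + \<Gamma> (X (int k - 1) \<omega>) * PiR Rho k \<omega>\<bar>}"

lemma Gam_X_past_measurable: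
  assumes z: "z \<in> space S" and "j \<le> n"
  shows "(\<lambda>\<omega>. \<Gamma> (X (int j - 1) \<omega>)) \<in> borel_measurable (markov_modulated.past (Pm z) S X Xi Rho n)"
proof -
  interpret Z: markov_modulated "Pm z" S X Xi Rho H G by (rule markov_modulated_Pm[OF z])
  show ?thesis using \<open>j \<le> n\<close> by (intro measurable_compose[OF Z.X_past_measurable Gam_measurable]) simp
qed

lemma exceed_past:
  assumes z: "z \<in> space S" and "j \<le> n"
  shows "exceed t j \<in> sets (markov_modulated.past (Pm z) S X Xi Rho n)"
proof -
  interpret Z: markov_modulated "Pm z" S X Xi Rho H G by (rule markov_modulated_Pm[OF z])
  have [measurable]: "Rpart Xi Rho j \<in> borel_measurable (Z.past n)" "PiR Rho j \<in> borel_measurable (Z.past n)"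
      "(\<lambda>\<omega>. \<Gamma> (X (int j - 1) \<omega>)) \<in> borel_measurable (Z.past n)"
    using \<open>j \<le> n\<close> by (auto intro: Z.Rpart_past_measurable Z.PiR_past_measurable Gam_X_past_measurable[OF z])
  have "{\<omega> \<in> space (Z.past n). t < \<bar>Rpart Xi Rho j \<omega> + \<Gamma> (X (int j - 1) \<omega>) * PiR Rho j \<omega>\<bar>} \<in> sets (Z.past n)"
    by measurable
  then show ?thesis by (simp add: exceed_def space_Pm[OF z])
qed

lemma exceed_in_sets: "z \<in> space S \<Longrightarrow> exceed t k \<in> sets (Pm z)"
  using exceed_past[of z k k t] markov_modulated.sets_past_subset[OF markov_modulated_Pm] by blast

lemma abs_Rfull_ge_in_sets: "z \<in> space S \<Longrightarrow> {\<omega> \<in> space M. t \<le> \<bar>Rfull Xi Rho \<omega>\<bar>} \<in> sets (Pm z)"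
  using sets_Pm by simp measurable

text \<open>Write s = R_k + \<Gamma>(x_(k-1)) \<Pi>_k. Multiplying the restarted perpetuity by \<sigma> = s \<Pi>_k turns
  its limit into s (R - R_k), so no division by \<Pi>_k is needed, and the event
  \<sigma> \<Gamma>(x_(k-1)) \<le> s (R - R_k) says 0 \<le> s (R - s), which gives |R| \<ge> |s| > t.\<close>

lemma half_emeasure_first_exceed_le:
  assumes z: "z \<in> space S"
  shows "1/2 * emeasure (Pm z) (disjointed (exceed t) k)
    \<le> emeasure (Pm z) (disjointed (exceed t) k \<inter> {\<omega> \<in> space M. t \<le> \<bar>Rfull Xi Rho \<omega>\<bar>})"
proof -
  interpret Z: markov_modulated "Pm z" S X Xi Rho H G by (rule markov_modulated_Pm[OF z])
  let ?D = "disjointed (exceed t) k"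
  define c where "c \<omega> = \<Gamma> (X (int k - 1) \<omega>)" for \<omega>
  define s where "s \<omega> = Rpart Xi Rho k \<omega> + c \<omega> * PiR Rho k \<omega>" for \<omega>
  have past_measurable [measurable]: "Rpart Xi Rho k \<in> borel_measurable (Z.past k)"
    "PiR Rho k \<in> borel_measurable (Z.past k)" "c \<in> borel_measurable (Z.past k)"
    unfolding c_def by (auto intro: Z.Rpart_past_measurable Z.PiR_past_measurable Gam_X_past_measurable[OF z])
  have D_past: "?D \<in> sets (Z.past k)"
    unfolding disjointed_def by (intro sets.Diff sets.finite_UN exceed_past[OF z]) auto
  have D_space: "?D \<subseteq> space M"
    using disjointed_subset[of "exceed t" k] by (auto simp: exceed_def)
  have "1/2 * emeasure (Pm z) ?D \<le>
      emeasure (Pm z) {\<omega> \<in> ?D. s \<omega> * PiR Rho k \<omega> * c \<omega> \<le> s \<omega> * (Rfull Xi Rho \<omega> - Rpart Xi Rho k \<omega>)}"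
  proof (rule Z.half_emeasure_le_emeasure_limit[OF D_past _ past_measurable(3)])
    show "(\<lambda>\<omega>. s \<omega> * PiR Rho k \<omega>) \<in> borel_measurable (Z.past k)" unfolding s_def by measurable
    show "(\<lambda>\<omega>. s \<omega> * (Rfull Xi Rho \<omega> - Rpart Xi Rho k \<omega>)) \<in> borel_measurable (Pm z)"
      using Rfull_Pm_measurable[OF z] past_measurable[THEN measurable_from_subalg[OF Z.subalgebra_past]]
      unfolding s_def by measurable
    show "AE \<omega> in Pm z. \<omega> \<in> ?D \<longrightarrow>
        (\<lambda>m. s \<omega> * PiR Rho k \<omega> * perp_sum m (Z.future k m \<omega>)) \<longlonglongrightarrow> s \<omega> * (Rfull Xi Rho \<omega> - Rpart Xi Rho k \<omega>)"
      using Pm_summable[OF z]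
      by eventually_elim (simp add: mult.assoc tendsto_mult_left Z.PiR_mult_perp_sum_future_tendsto)
  next
    fix \<omega> and \<delta> :: real assume "\<omega> \<in> ?D" "0 < \<delta>"
    then have "X (int k - 1) \<omega> \<in> space S" using D_space measurable_space[OF X_measurable] by auto
    from half_le_liminf_iter_kernel[OF this \<open>0 < \<delta>\<close>]
    show "1/2 \<le> liminf (\<lambda>m. iter_kernel (step_kernel S H G) m
        (\<lambda>v. of_bool (s \<omega> * PiR Rho k \<omega> * c \<omega> - \<delta> \<le> s \<omega> * PiR Rho k \<omega> * perp_sum m v)) (X (int k - 1) \<omega>))"
      by (simp add: c_def)
  qed
  also have "\<dots> \<le> emeasure (Pm z) (?D \<inter> {\<omega> \<in> space M. t \<le> \<bar>Rfull Xi Rho \<omega>\<bar>})"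
  proof (rule emeasure_mono)
    show "?D \<inter> {\<omega> \<in> space M. t \<le> \<bar>Rfull Xi Rho \<omega>\<bar>} \<in> sets (Pm z)"
      using D_past Z.sets_past_subset abs_Rfull_ge_in_sets[OF z] by auto
    show "{\<omega> \<in> ?D. s \<omega> * PiR Rho k \<omega> * c \<omega> \<le> s \<omega> * (Rfull Xi Rho \<omega> - Rpart Xi Rho k \<omega>)}
        \<subseteq> ?D \<inter> {\<omega> \<in> space M. t \<le> \<bar>Rfull Xi Rho \<omega>\<bar>}"
      using D_space disjointed_subset[of "exceed t" k]
      by (auto simp: exceed_def s_def c_def intro: le_abs_if_same_side)
  qed
  finally show ?thesis .
qed

lemma half_prob_exceed_le:
  assumes z: "z \<in> space S"
  shows "1/2 * measure (Pm z) (\<Union>k. exceed t k) \<le> measure (Pm z) {\<omega> \<in> space M. t \<le> \<bar>Rfull Xi Rho \<omega>\<bar>}"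
proof -
  interpret Pz: prob_space "Pm z" by (rule prob_space_Pm[OF z])
  let ?D = "disjointed (exceed t)"
  let ?R = "{\<omega> \<in> space M. t \<le> \<bar>Rfull Xi Rho \<omega>\<bar>}"
  have D_sets: "range ?D \<subseteq> sets (Pm z)"
    by (rule sets.range_disjointed_sets) (use exceed_in_sets[OF z] in auto)
  have R_sets: "?R \<in> sets (Pm z)" by (rule abs_Rfull_ge_in_sets[OF z])
  have "1/2 * emeasure (Pm z) (\<Union>k. ?D k) = (\<Sum>k. 1/2 * emeasure (Pm z) (?D k))"
    using suminf_emeasure[OF D_sets disjoint_family_disjointed] by simp
  also have "\<dots> \<le> (\<Sum>k. emeasure (Pm z) (?D k \<inter> ?R))"
    by (intro suminf_le half_emeasure_first_exceed_le[OF z]) auto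
  also have "\<dots> = emeasure (Pm z) (\<Union>k. ?D k \<inter> ?R)"
    using D_sets R_sets disjoint_family_disjointed[of "exceed t"]
    by (intro suminf_emeasure) (auto simp: disjoint_family_on_def)
  also have "\<dots> \<le> emeasure (Pm z) ?R"
    using R_sets by (intro emeasure_mono) auto
  finally show ?thesis
    by (simp add: ennreal_half_mult[symmetric] Pz.emeasure_eq_measure UN_disjointed_eq)
qed

end

theorem lemma5p2:
  fixes M :: "'w measure" and S :: "'s measure"
    and X :: "int \<Rightarrow> 'w \<Rightarrow> 's" and Xi Rho :: "int \<Rightarrow> 'w \<Rightarrow> real"
    and H :: "'s \<Rightarrow> 's measure" and G :: "'s \<Rightarrow> 's \<Rightarrow> (real \<times> real) measure"
    and Pm :: "'s \<Rightarrow> 'w measure"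
    and t :: real and z :: 's
  assumes M: "prob_space M"
    and X_meas: "\<And>i. X i \<in> M \<rightarrow>\<^sub>M S"
    and Xi_meas: "\<And>i. Xi i \<in> borel_measurable M"
    and Rho_meas: "\<And>i. Rho i \<in> borel_measurable M"
    and H_kernel: "H \<in> S \<rightarrow>\<^sub>M prob_algebra S"
    and G_kernel: "(\<lambda>(x, y). G x y) \<in> S \<Otimes>\<^sub>M S \<rightarrow>\<^sub>M prob_algebra (borel :: (real \<times> real) measure)"
    and stationary: "\<And>k. distr M (PiM UNIV (\<lambda>_. S \<Otimes>\<^sub>M borel \<Otimes>\<^sub>M borel)) (proc_shift X Xi Rho k)
                       = distr M (PiM UNIV (\<lambda>_. S \<Otimes>\<^sub>M borel \<Otimes>\<^sub>M borel)) (proc_shift X Xi Rho 0)"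
    and markov: "\<And>n. markov_step M S H G X Xi Rho n"
    and R_conv: "AE \<omega> in M. summable (Rser_term Xi Rho \<omega>)"
    and Pm_prob: "\<And>x. x \<in> space S \<Longrightarrow> prob_space (Pm x)"
    and Pm_sets: "\<And>x. x \<in> space S \<Longrightarrow> sets (Pm x) = sets M"
    and Pm_meas: "\<And>E. E \<in> sets M \<Longrightarrow> (\<lambda>x. measure (Pm x) E) \<in> borel_measurable S"
    and Pm_cond: "\<And>E A. E \<in> sets (proc_sigma M S X Xi Rho {-1..}) \<Longrightarrow> A \<in> sets S \<Longrightarrow>
         measure M (E \<inter> {\<omega> \<in> space M. X (-1) \<omega> \<in> A})
           = (\<integral>x. indicator A x * measure (Pm x) E \<partial>(distr M S (X (-1))))"
    and Pm_start: "\<And>x. x \<in> space S \<Longrightarrow> AE \<omega> in Pm x. X (-1) \<omega> = x"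
    and Pm_markov: "\<And>x n. x \<in> space S \<Longrightarrow> n \<ge> 0 \<Longrightarrow> markov_step (Pm x) S H G X Xi Rho n"
    and Pm_R_conv: "\<And>x. x \<in> space S \<Longrightarrow> AE \<omega> in Pm x. summable (Rser_term Xi Rho \<omega>)"
    and t_pos: "t > 0"
    and z_in: "z \<in> space S"
  shows "measure (Pm z) {\<omega> \<in> space (Pm z). \<bar>Rfull Xi Rho \<omega>\<bar> \<ge> t}
         \<ge> 1/2 * measure (Pm z) {\<omega> \<in> space (Pm z).
               \<exists>n::nat. \<bar>Rpart Xi Rho n \<omega> + Gam Pm (Rfull Xi Rho) (X (int n - 1) \<omega>) * PiR Rho n \<omega>\<bar> > t}"
proof -
  interpret markov_modulated_family M S X Xi Rho H G Pm
    by (rule markov_modulated_family.intro)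
      (fact X_meas Xi_meas Rho_meas H_kernel G_kernel Pm_prob Pm_sets Pm_meas Pm_start Pm_markov Pm_R_conv)+
  have "{\<omega> \<in> space (Pm z). \<exists>n::nat.
      \<bar>Rpart Xi Rho n \<omega> + Gam Pm (Rfull Xi Rho) (X (int n - 1) \<omega>) * PiR Rho n \<omega>\<bar> > t} = (\<Union>n. exceed t n)"
    by (auto simp: exceed_def space_Pm[OF z_in])
  with half_prob_exceed_le[OF z_in, of t] show ?thesis
    by (simp add: space_Pm[OF z_in])
qed

end
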